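(* For every integers $d \geq 2$ and $s \geq 1$, $\mathsf U_{d,s}\subseteq\mathsf O_{d,2s}$.
   Context: For integers $d\ge2$, $s\ge1$ and $U\in M_{ds}(\mathbb C)$ viewed as a $d\times d$ block matrix with blocks $U_{ij}\in M_s(\mathbb C)$, set $\phi_{d,s}(U)=\big(\tfrac1s\|U_{ij}\|_F^2\big)_{i,j=1}^d$ with $\|X\|_F=\operatorname{Tr}(XX^* )^{1/2}$. Define $\mathsf U_{d,s}:=\phi_{d,s}(\mathcal U(ds))$, where $\mathcal U(n)$ is the unitary group, and $\mathsf O_{d,s}:=\phi_{d,s}(\mathcal O(ds))$, where $\mathcal O(n)$ is the group of $n\times n$ real orthogonal matrices. *)

theory Defs
  imports Complex_Main
begin

text \<open>Square n x n matrices are represented as functions nat => nat => 'a,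
  only the entries with indices < n being relevant (indices are 0-based).\<close>

definition unitary_mat :: "nat \<Rightarrow> (nat \<Rightarrow> nat \<Rightarrow> complex) \<Rightarrow> bool" where
  "unitary_mat n U \<longleftrightarrow>
     (\<forall>i<n. \<forall>j<n. (\<Sum>k<n. U i k * cnj (U j k)) = (if i = j then 1 else 0))"

definition real_orthogonal_mat :: "nat \<Rightarrow> (nat \<Rightarrow> nat \<Rightarrow> real) \<Rightarrow> bool" where
  "real_orthogonal_mat n Q \<longleftrightarrow>
     (\<forall>i<n. \<forall>j<n. (\<Sum>k<n. Q i k * Q j k) = (if i = j then 1 else 0))"

text \<open>phi_{d,s}: the d x d matrix of normalised squared Frobenius norms of the
  s x s blocks; block (i,j) consists of the entries (i*s+a, j*s+b), a,b<s.\<close>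

definition phi :: "nat \<Rightarrow> nat \<Rightarrow> (nat \<Rightarrow> nat \<Rightarrow> complex) \<Rightarrow> (nat \<Rightarrow> nat \<Rightarrow> real)" where
  "phi d s U = (\<lambda>i j. if i < d \<and> j < d
      then (1 / real s) * (\<Sum>a<s. \<Sum>b<s. (cmod (U (i * s + a) (j * s + b)))\<^sup>2)
      else 0)"

definition U_set :: "nat \<Rightarrow> nat \<Rightarrow> (nat \<Rightarrow> nat \<Rightarrow> real) set" where
  "U_set d s = phi d s ` {U. unitary_mat (d * s) U}"

definition O_set :: "nat \<Rightarrow> nat \<Rightarrow> (nat \<Rightarrow> nat \<Rightarrow> real) set" where
  "O_set d s = phi d s ` {(\<lambda>i j. complex_of_real (Q i j)) | Q. real_orthogonal_mat (d * s) Q}"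

end

theory Submission
  imports Defs
begin

text \<open>Write each complex entry z = x + iy of U as the real 2 x 2 block [[x, -y], [y, x]],
  which represents multiplication by z on \<real>^2 = \<complex>. Doing this inside every s x s block
  turns U into a real matrix Q with blocks [[Re U_ij, -Im U_ij], [Im U_ij, Re U_ij]] of size 2s.
  Since z \<mapsto> [[x, -y], [y, x]] is additive and multiplicative and sends cnj z to the transpose,
  U U* = I becomes Q Q^T = I; and each 2s x 2s block of Q contains every |U_ij|^2 twice, so its
  squared Frobenius norm is twice that of the original block, which the normalising factor 1/(2s)
  compensates.\<close>

definition block_double :: "nat \<Rightarrow> nat \<Rightarrow> bool \<Rightarrow> nat" where
  "block_double s v t = (v div s) * (2 * s) + (if t then s else 0) + v mod s"

definition block_halve :: "nat \<Rightarrow> nat \<Rightarrow> nat" where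
  "block_halve s p = (p div (2 * s)) * s + p mod s"

definition in_second_half :: "nat \<Rightarrow> nat \<Rightarrow> bool" where
  "in_second_half s p \<longleftrightarrow> s \<le> p mod (2 * s)"

lemma block_double_block:
  assumes "a < s"
  shows "block_double s (i * s + a) t = i * (2 * s) + (if t then s else 0) + a"
  using assms unfolding block_double_def by simp

lemma block_double_parts:
  assumes "0 < s"
  shows "block_double s v t div (2 * s) = v div s"
    and "block_double s v t mod (2 * s) = (if t then s else 0) + v mod s"
proof -
  have lt: "(if t then s else 0) + v mod s < 2 * s"
    using mod_less_divisor[OF assms, of v] by auto
  have eq: "block_double s v t = (v div s) * (2 * s) + ((if t then s else 0) + v mod s)"
    unfolding block_double_def by simp
  show "block_double s v t div (2 * s) = v div s"
    and "block_double s v t mod (2 * s) = (if t then s else 0) + v mod s"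
    unfolding eq using lt by simp_all
qed

lemma block_halve_double:
  assumes "0 < s"
  shows "block_halve s (block_double s v t) = v"
    and "in_second_half s (block_double s v t) = t"
proof -
  have "block_double s v t = s * (2 * (v div s) + (if t then 1 else 0)) + v mod s"
    unfolding block_double_def by (simp add: algebra_simps)
  then have "block_double s v t mod s = v mod s" by simp
  then show "block_halve s (block_double s v t) = v"
    unfolding block_halve_def block_double_parts(1)[OF assms] by simp
  show "in_second_half s (block_double s v t) = t"
    unfolding in_second_half_def block_double_parts(2)[OF assms]
    using mod_less_divisor[OF assms, of v] by auto
qed

lemma block_double_halve:
  assumes "0 < s"
  shows "block_double s (block_halve s p) (in_second_half s p) = p"
proof -
  have "p mod (2 * s) mod s = p mod s" by (simp add: mod_mod_cancel)
  moreover have "p mod (2 * s) - s < s" using mod_less_divisor[of "2 * s" p] assms by linarith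
  ultimately have "p mod (2 * s) = (if in_second_half s p then s else 0) + p mod s"
    unfolding in_second_half_def by (auto simp: le_mod_geq)
  moreover have "block_halve s p div s = p div (2 * s)" "block_halve s p mod s = p mod s"
    using assms unfolding block_halve_def by auto
  ultimately show ?thesis
    unfolding block_double_def by (metis div_mult_mod_eq add.assoc)
qed

lemma block_double_less:
  assumes "0 < s" "v < n * s"
  shows "block_double s v t < n * (2 * s)"
proof -
  have "v div s + 1 \<le> n" using assms by (simp add: less_mult_imp_div_less Suc_leI)
  then have "(v div s + 1) * (2 * s) \<le> n * (2 * s)" by (rule mult_right_mono) simp
  then show ?thesis
    using mod_less_divisor[OF assms(1), of v] unfolding block_double_def by auto
qed

lemma block_halve_less:
  assumes "0 < s" "p < n * (2 * s)"
  shows "block_halve s p < n * s"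
proof -
  have "p div (2 * s) + 1 \<le> n" using assms by (simp add: less_mult_imp_div_less Suc_leI)
  then have "(p div (2 * s) + 1) * s \<le> n * s" by (rule mult_right_mono) simp
  then show ?thesis
    using mod_less_divisor[OF assms(1), of p] unfolding block_halve_def by auto
qed

lemma bij_betw_block_double:
  assumes "0 < s"
  shows "bij_betw (\<lambda>(v, t). block_double s v t) ({..<n * s} \<times> UNIV) {..<n * (2 * s)}"
  by (rule bij_betw_byWitness[where f' = "\<lambda>p. (block_halve s p, in_second_half s p)"])
     (auto simp: assms block_halve_double block_double_halve block_double_less block_halve_less)

lemma block_double_eq_iff:
  assumes "0 < s"
  shows "block_double s v t = block_double s v' t' \<longleftrightarrow> v = v' \<and> t = t'"
proof
  assume "block_double s v t = block_double s v' t'"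
  then have "block_halve s (block_double s v t) = block_halve s (block_double s v' t')"
    and "in_second_half s (block_double s v t) = in_second_half s (block_double s v' t')"
    by simp_all
  then show "v = v' \<and> t = t'" by (simp add: block_halve_double[OF assms])
qed simp

lemma sum_lessThan_double:
  fixes f :: "nat \<Rightarrow> 'a::comm_monoid_add"
  shows "(\<Sum>a<2 * s. f a) = (\<Sum>a<s. \<Sum>t\<in>UNIV. f ((if t then s else 0) + a))"
proof -
  have "(\<Sum>a<2 * s. f a) = (\<Sum>a\<in>{0..<s}. f a) + (\<Sum>a\<in>{s..<2 * s}. f a)"
    by (simp add: sum.atLeastLessThan_concat atLeast0LessThan[symmetric])
  also have "(\<Sum>a\<in>{s..<2 * s}. f a) = (\<Sum>a\<in>{0..<s}. f (s + a))"
    using sum.shift_bounds_nat_ivl[of f 0 s s] by (simp add: mult_2 add.commute)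
  finally show ?thesis
    by (simp add: atLeast0LessThan UNIV_bool sum.distrib add.commute)
qed

text \<open>The matrix [[Re z, -Im z], [Im z, Re z]], rows and columns indexed by bool,
  False first.\<close>

definition real_mat_of_complex :: "complex \<Rightarrow> bool \<Rightarrow> bool \<Rightarrow> real" where
  "real_mat_of_complex z t t' =
     (if t = t' then Re z else if t then Im z else - Im z)"

lemma real_mat_of_complex_1: "real_mat_of_complex 1 t t' = (if t = t' then 1 else 0)"
  and real_mat_of_complex_0: "real_mat_of_complex 0 t t' = 0"
  by (simp_all add: real_mat_of_complex_def)

lemma real_mat_of_complex_sum:
  "real_mat_of_complex (\<Sum>x\<in>A. f x) t t' = (\<Sum>x\<in>A. real_mat_of_complex (f x) t t')"
  by (simp add: real_mat_of_complex_def sum_negf)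

lemma real_mat_of_complex_mult_transpose:
  "(\<Sum>r\<in>UNIV. real_mat_of_complex z t r * real_mat_of_complex w t' r)
     = real_mat_of_complex (z * cnj w) t t'"
  by (cases t; cases t') (simp_all add: real_mat_of_complex_def UNIV_bool algebra_simps)

lemma sum_real_mat_of_complex_squares:
  "(\<Sum>t\<in>UNIV. \<Sum>t'\<in>UNIV. (real_mat_of_complex z t t')\<^sup>2) = 2 * (cmod z)\<^sup>2"
  by (simp add: real_mat_of_complex_def UNIV_bool cmod_power2)

definition realification :: "nat \<Rightarrow> (nat \<Rightarrow> nat \<Rightarrow> complex) \<Rightarrow> nat \<Rightarrow> nat \<Rightarrow> real" where
  "realification s U p q =
     real_mat_of_complex (U (block_halve s p) (block_halve s q))
       (in_second_half s p) (in_second_half s q)"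

lemma realification_block_double:
  assumes "0 < s"
  shows "realification s U (block_double s u t) (block_double s v t')
           = real_mat_of_complex (U u v) t t'"
  by (simp add: realification_def block_halve_double[OF assms])

lemma realification_block:
  assumes "0 < s" "a < s" "b < s"
  shows "realification s U (i * (2 * s) + ((if t then s else 0) + a))
           (j * (2 * s) + ((if t' then s else 0) + b))
         = real_mat_of_complex (U (i * s + a) (j * s + b)) t t'"
  using realification_block_double[OF assms(1), of U "i * s + a" t "j * s + b" t']
  by (simp only: block_double_block assms add.assoc)

lemma real_orthogonal_realification:
  assumes "0 < s" and unitary: "unitary_mat (n * s) U"
  shows "real_orthogonal_mat (n * (2 * s)) (realification s U)"
  unfolding real_orthogonal_mat_def
proof (intro allI impI)
  fix p p' assume p: "p < n * (2 * s)" and p': "p' < n * (2 * s)"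
  define u t u' t' where "u = block_halve s p" and "t = in_second_half s p"
    and "u' = block_halve s p'" and "t' = in_second_half s p'"
  have u: "u < n * s" "p = block_double s u t" and u': "u' < n * s" "p' = block_double s u' t'"
    using p p' assms(1)
    by (simp_all add: u_def t_def u'_def t'_def block_halve_less block_double_halve)
  let ?R = "realification s U"
  have "(\<Sum>q<n * (2 * s). ?R p q * ?R p' q)
      = (\<Sum>(v, r)\<in>{..<n * s} \<times> UNIV. ?R p (block_double s v r) * ?R p' (block_double s v r))"
    using sum.reindex_bij_betw[OF bij_betw_block_double[OF assms(1)],
        of "\<lambda>q. ?R p q * ?R p' q"]
    by (simp add: case_prod_beta')
  also have "\<dots> = (\<Sum>v<n * s. \<Sum>r\<in>UNIV.
                     real_mat_of_complex (U u v) t r * real_mat_of_complex (U u' v) t' r)"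
    by (simp add: sum.cartesian_product u u' realification_block_double[OF assms(1)])
  also have "\<dots> = real_mat_of_complex (\<Sum>v<n * s. U u v * cnj (U u' v)) t t'"
    by (simp add: real_mat_of_complex_mult_transpose real_mat_of_complex_sum)
  also have "\<dots> = real_mat_of_complex (if u = u' then 1 else 0) t t'"
    using unitary u u' unfolding unitary_mat_def by simp
  also have "\<dots> = (if p = p' then 1 else 0)"
    by (simp add: u u' block_double_eq_iff[OF assms(1)]
        real_mat_of_complex_1 real_mat_of_complex_0)
  finally show "(\<Sum>q<n * (2 * s). ?R p q * ?R p' q) = (if p = p' then 1 else 0)" .
qed

lemma phi_realification:
  assumes "0 < s"
  shows "phi d (2 * s) (\<lambda>p q. complex_of_real (realification s U p q)) = phi d s U"
proof (intro ext)
  fix i j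
  let ?z = "\<lambda>a b. U (i * s + a) (j * s + b)"
  have block_sum:
    "(\<Sum>a<2 * s. \<Sum>b<2 * s. (realification s U (i * (2 * s) + a) (j * (2 * s) + b))\<^sup>2)
       = 2 * (\<Sum>a<s. \<Sum>b<s. (cmod (?z a b))\<^sup>2)"
  proof -
    have "(\<Sum>a<2 * s. \<Sum>b<2 * s. (realification s U (i * (2 * s) + a) (j * (2 * s) + b))\<^sup>2)
        = (\<Sum>a<s. \<Sum>t\<in>UNIV. \<Sum>b<s. \<Sum>t'\<in>UNIV. (real_mat_of_complex (?z a b) t t')\<^sup>2)"
      unfolding sum_lessThan_double
      by (simp add: realification_block[OF assms])
    also have "\<dots> = (\<Sum>a<s. \<Sum>b<s. \<Sum>t\<in>UNIV. \<Sum>t'\<in>UNIV. (real_mat_of_complex (?z a b) t t')\<^sup>2)"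
      by (rule sum.cong[OF refl], rule sum.swap)
    finally show ?thesis
      by (simp add: sum_real_mat_of_complex_squares sum_distrib_left)
  qed
  show "phi d (2 * s) (\<lambda>p q. complex_of_real (realification s U p q)) i j = phi d s U i j"
    using assms by (simp add: phi_def block_sum)
qed

theorem proposition4p2:
  fixes d s :: nat
  assumes "d \<ge> 2" and "s \<ge> 1"
  shows "U_set d s \<subseteq> O_set d (2 * s)"
proof
  fix x assume "x \<in> U_set d s"
  then obtain U where U: "unitary_mat (d * s) U" and x: "x = phi d s U"
    unfolding U_set_def by blast
  have s: "0 < s" using assms(2) by simp
  from real_orthogonal_realification[OF s U] show "x \<in> O_set d (2 * s)"
    unfolding O_set_def x phi_realification[OF s, of d U, symmetric] by blast
qed

end
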